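(* Let $a>0$ and assume that for every $t\in[0,T]$, $(b,\Sigma,F)\in\Theta_t$ implies $b^T\Sigma^{-1}b\le2q_t(1-\log q_t)$. For any $\theta\in\Theta$ and $\Pi\in\mathfrak A^\Pi_0$, the maximizer of $D\mapsto H(\Pi,D,\theta)$ over $\mathfrak A^D_0$ is $D^*_t=q_t\int_t^Th_s^{\theta_s}(\Pi_s)ds$, $t\in[0,T]$, and the maximum value is \[ H(\Pi,D^*,\theta)=\frac1a\Big(1-(T+1)\exp\Big(-\frac a{T+1}\int_0^Th_s^{\theta_s}(\Pi_s)ds\Big)\Big). \]
   Context: Fix $T>0$, $d\ge1$, $\varepsilon\in(0,2]$. Let $\mathbb{S}^d_+$ be the symmetric positive definite $d\times d$ matrices, $\mathcal L$ the Lévy measures on $\mathbb{R}^d$, with $d^\varepsilon_{\mathcal L}(\mu,\nu)=\sup\int f\,d(\tilde\mu-\tilde\nu)$, $\tilde\mu(A)=\int_A(|z|^{2-\varepsilon}\wedge1)\mu(dz)$, sup over bounded continuous $f$ with $\sup_{z\neq\hat z}[|f(z)|\vee|f(z)-f(\hat z)|/|z-\hat z|^{\varepsilon\wedge1}]\le1$. $\mathcal C\subset\mathbb{R}^d\times\mathbb{S}^d_+\times\mathcal L$ is compact for $d_{\mathcal C}=|y-\hat y|\vee\|M-\hat M\|_2\vee d^\varepsilon_{\mathcal L}(\mu,\hat\mu)$; $\Theta:[0,T]\twoheadrightarrow\mathcal C$ is a weakly measurable correspondence with closed convex values, and $\Theta$ also denotes the set of Borel $\theta:[0,T]\to\mathcal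 C$ with $\theta_t\in\Theta_t$. Assume $\mathbf S_t=\bigcup_{(y,M,\mu)\in\Theta_t}\mathrm{supp}(\mu)$ is closed, there is $\kappa_t>0$ with $\{|z|\le\kappa_t^{-1}\}\subseteq\mathrm{Conv}(\mathbf S_t\cup\{0\})\subseteq\{|z|\le\kappa_t\}$, and $|y|\vee\|M\|_2\vee d^\varepsilon_{\mathcal L}(\mu,0)\le\kappa_t$ on $\Theta_t$. $U(x)=-e^{-ax}/a$, $q_t=(T-t+1)^{-1}$; $\mathfrak A^\Pi_0$ = Borel $\Pi:[0,T]\to\mathbb{R}^d$, $\mathfrak A^D_0$ = Borel $D:[0,T]\to\mathbb{R}$. Local kernel $h_t^{(y,M,\mu)}(x)=x^Ty-\frac12aq_tx^TMx+\int(\frac{e^{-aq_tx^Tz}}{-aq_t}+\frac1{aq_t}-x^Tz)\mu(dz)$. Global kernel $H(\Pi,D,\theta)=\int_0^T\exp\big(\int_0^t-aq_s(h_s^{\theta_s}(\Pi_s)-D_s)ds\big)\big(q_t(h_t^{\theta_t}(\Pi_t)-D_t)+U(D_t)\big)dt$. *)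

theory Defs
  imports "HOL-Analysis.Analysis"
begin

text \<open>Triples (y, M, mu): drift vector, covariance matrix, Levy measure on R^d,
  where R^d is rendered as real^'n for a finite index type 'n.\<close>

type_synonym 'n triple = "(real^'n) \<times> (real^'n^'n) \<times> (real^'n) measure"

definition qf :: "real \<Rightarrow> real \<Rightarrow> real" where
  "qf T t = 1 / (T - t + 1)"

definition Uexp :: "real \<Rightarrow> real \<Rightarrow> real" where
  "Uexp a x = - exp (- a * x) / a"

definition tilde :: "real \<Rightarrow> (real^'n::finite) measure \<Rightarrow> (real^'n) measure" where
  "tilde eps mu = density mu (\<lambda>z. ennreal (min (norm z powr (2 - eps)) 1))"

text \<open>Levy measures on R^d (for which tilde mu is finite, so that d_L is defined).\<close>
definition levy_eps :: "real \<Rightarrow> (real^'n::finite) measure \<Rightarrow> bool" where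
  "levy_eps eps mu \<longleftrightarrow> sets mu = sets borel \<and> emeasure mu {0} = 0
     \<and> (\<integral>\<^sup>+ z. ennreal (min ((norm z)\<^sup>2) 1) \<partial>mu) < \<infinity>
     \<and> emeasure (tilde eps mu) (space mu) < \<infinity>"

definition test_fun :: "real \<Rightarrow> (real^'n \<Rightarrow> real) \<Rightarrow> bool" where
  "test_fun eps f \<longleftrightarrow> continuous_on UNIV f \<and> bounded (range f)
     \<and> (\<forall>z. \<bar>f z\<bar> \<le> 1)
     \<and> (\<forall>z z'. z \<noteq> z' \<longrightarrow> \<bar>f z - f z'\<bar> \<le> dist z z' powr (min eps 1))"

definition dL :: "real \<Rightarrow> (real^'n::finite) measure \<Rightarrow> (real^'n) measure \<Rightarrow> real" where
  "dL eps mu nu = (SUP f \<in> {f. test_fun eps f}.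
      (\<integral>z. f z \<partial>(tilde eps mu)) - (\<integral>z. f z \<partial>(tilde eps nu)))"

definition mnorm2 :: "real^'n^'n \<Rightarrow> real" where
  "mnorm2 M = onorm (\<lambda>x. M *v x)"

definition sym_pd :: "real^'n^'n \<Rightarrow> bool" where
  "sym_pd M \<longleftrightarrow> transpose M = M \<and> (\<forall>x. x \<noteq> 0 \<longrightarrow> x \<bullet> (M *v x) > 0)"

definition dC :: "real \<Rightarrow> ('n::finite) triple \<Rightarrow> ('n::finite) triple \<Rightarrow> real" where
  "dC eps p p' = max (dist (fst p) (fst p'))
      (max (mnorm2 (fst (snd p) - fst (snd p'))) (dL eps (snd (snd p)) (snd (snd p'))))"

definition Cspace :: "real \<Rightarrow> ('n::finite) triple set" where
  "Cspace eps = {(y, M, mu). sym_pd M \<and> levy_eps eps mu}"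

definition dC_open :: "real \<Rightarrow> ('n::finite) triple set \<Rightarrow> ('n::finite) triple set \<Rightarrow> bool" where
  "dC_open eps C U \<longleftrightarrow> U \<subseteq> C \<and>
     (\<forall>p\<in>U. \<exists>r>0. \<forall>p'\<in>C. dC eps p p' < r \<longrightarrow> p' \<in> U)"

definition dC_compact :: "real \<Rightarrow> ('n::finite) triple set \<Rightarrow> bool" where
  "dC_compact eps C \<longleftrightarrow> (\<forall>(y, M, mu)\<in>C. sym_pd M \<and> levy_eps eps mu) \<and>
     (\<forall>s::nat \<Rightarrow> 'n triple. (\<forall>n. s n \<in> C) \<longrightarrow>
        (\<exists>(r::nat \<Rightarrow> nat) p. strict_mono r \<and> p \<in> C \<and> (\<lambda>n. dC eps (s (r n)) p) \<longlonglongrightarrow> 0))"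

definition is_mix :: "real \<Rightarrow> ('n::finite) triple \<Rightarrow> ('n::finite) triple \<Rightarrow> ('n::finite) triple \<Rightarrow> bool" where
  "is_mix lam p p' r \<longleftrightarrow>
     fst r = lam *\<^sub>R fst p + (1 - lam) *\<^sub>R fst p' \<and>
     fst (snd r) = lam *\<^sub>R fst (snd p) + (1 - lam) *\<^sub>R fst (snd p') \<and>
     sets (snd (snd r)) = sets borel \<and>
     (\<forall>A\<in>sets borel. emeasure (snd (snd r)) A =
        ennreal lam * emeasure (snd (snd p)) A + ennreal (1 - lam) * emeasure (snd (snd p')) A)"

definition triple_convex :: "('n::finite) triple set \<Rightarrow> bool" where
  "triple_convex K \<longleftrightarrow> (\<forall>p\<in>K. \<forall>p'\<in>K. \<forall>lam\<in>{0..1}. \<forall>r. is_mix lam p p' r \<longrightarrow> r \<in> K)"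

definition supp :: "(real^'n::finite) measure \<Rightarrow> (real^'n) set" where
  "supp mu = {z. \<forall>U. open U \<longrightarrow> z \<in> U \<longrightarrow> emeasure mu U > 0}"

definition Sset :: "(real \<Rightarrow> ('n::finite) triple set) \<Rightarrow> real \<Rightarrow> (real^'n) set" where
  "Sset Theta t = (\<Union>p\<in>Theta t. supp (snd (snd p)))"

definition standing :: "real \<Rightarrow> real \<Rightarrow> ('n::finite) triple set \<Rightarrow> (real \<Rightarrow> ('n::finite) triple set)
    \<Rightarrow> (real \<Rightarrow> real) \<Rightarrow> bool" where
  "standing eps T C Theta kappa \<longleftrightarrow>
     T > 0 \<and> 0 < eps \<and> eps \<le> 2 \<and> dC_compact eps C \<and>
     (\<forall>t\<in>{0..T}.
        Theta t \<noteq> {} \<and> Theta t \<subseteq> C \<and>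
        dC_open eps C (C - Theta t) \<and> triple_convex (Theta t) \<and>
        closed (Sset Theta t) \<and> kappa t > 0 \<and>
        cball 0 (1 / kappa t) \<subseteq> convex hull (Sset Theta t \<union> {0}) \<and>
        convex hull (Sset Theta t \<union> {0}) \<subseteq> cball 0 (kappa t) \<and>
        (\<forall>(y, M, mu)\<in>Theta t. norm y \<le> kappa t \<and> mnorm2 M \<le> kappa t
            \<and> dL eps mu (null_measure borel) \<le> kappa t)) \<and>
     (\<forall>U. dC_open eps C U \<longrightarrow> {t\<in>{0..T}. Theta t \<inter> U \<noteq> {}} \<in> sets borel)"

definition theta_sel :: "real \<Rightarrow> real \<Rightarrow> ('n::finite) triple set \<Rightarrow> (real \<Rightarrow> ('n::finite) triple set)
    \<Rightarrow> (real \<Rightarrow> ('n::finite) triple) \<Rightarrow> bool" where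
  "theta_sel eps T C Theta theta \<longleftrightarrow>
     (\<forall>t\<in>{0..T}. theta t \<in> Theta t) \<and>
     (\<forall>U. dC_open eps C U \<longrightarrow> {t\<in>{0..T}. theta t \<in> U} \<in> sets borel)"

definition hloc :: "real \<Rightarrow> real \<Rightarrow> real \<Rightarrow> ('n::finite) triple \<Rightarrow> real^'n \<Rightarrow> real" where
  "hloc a T t p x = (case p of (y, M, mu) \<Rightarrow>
      x \<bullet> y - 1/2 * a * qf T t * (x \<bullet> (M *v x))
      + (\<integral>z. exp (- a * qf T t * (x \<bullet> z)) / (- a * qf T t) + 1 / (a * qf T t) - x \<bullet> z \<partial>mu))"

definition inner_int :: "real \<Rightarrow> real \<Rightarrow> (real \<Rightarrow> real^'n) \<Rightarrow> (real \<Rightarrow> real) \<Rightarrow> (real \<Rightarrow> ('n::finite) triple) \<Rightarrow> real \<Rightarrow> real" where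
  "inner_int a T Pol D theta s = - a * qf T s * (hloc a T s (theta s) (Pol s) - D s)"

definition outer_int :: "real \<Rightarrow> real \<Rightarrow> (real \<Rightarrow> real^'n) \<Rightarrow> (real \<Rightarrow> real) \<Rightarrow> (real \<Rightarrow> ('n::finite) triple) \<Rightarrow> real \<Rightarrow> real" where
  "outer_int a T Pol D theta t =
     exp (LBINT s:{0..t}. inner_int a T Pol D theta s)
     * (qf T t * (hloc a T t (theta t) (Pol t) - D t) + Uexp a (D t))"

definition Hglob :: "real \<Rightarrow> real \<Rightarrow> (real \<Rightarrow> real^'n) \<Rightarrow> (real \<Rightarrow> real) \<Rightarrow> (real \<Rightarrow> ('n::finite) triple) \<Rightarrow> real" where
  "Hglob a T Pol D theta = (LBINT t:{0..T}. outer_int a T Pol D theta t)"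

definition admissible_D :: "real \<Rightarrow> real \<Rightarrow> (real \<Rightarrow> real^'n) \<Rightarrow> (real \<Rightarrow> real) \<Rightarrow> (real \<Rightarrow> ('n::finite) triple) \<Rightarrow> bool" where
  "admissible_D a T Pol D theta \<longleftrightarrow>
     D \<in> borel_measurable (restrict_space borel {0..T}) \<and>
     set_integrable lborel {0..T} (inner_int a T Pol D theta) \<and>
     set_integrable lborel {0..T} (outer_int a T Pol D theta)"

end

theory Submission
  imports Defs
begin

text \<open>
  Write X for the inner integral of H, D* for the candidate optimum, Y = X - a D* and
  u = a (D - D*). The integrand of H is -(X' exp X + exp X exp (-a D)) / a. Since
  Y' = a q (D - D*), the function (T - t + 1) exp Y has derivative exp Y (u - 1), so
  exp X exp (-a D) = exp Y exp (-u) = rho - ((T - t + 1) exp Y)' with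
  rho = exp Y (exp (-u) - 1 + u) \<ge> 0. Integrating over [0, T] and using Y T = X T gives
  H(D) = (1 - (T + 1) exp (Y 0)) / a - (\<integral>rho) / a, and rho vanishes exactly where D = D*.

  As D is merely measurable, X is only absolutely continuous, so this calculus is done for
  Lebesgue primitives: the product rule comes from Fubini's theorem, and the chain rule for
  exp from the product rule for the partial sums of the exponential series and dominated
  convergence.
\<close>

section \<open>Exponential series\<close>

lemma exp_partial_sum_LIMSEQ: "(\<lambda>N. \<Sum>k<N. x ^ k / fact k) \<longlonglongrightarrow> exp (x::real)"
  using exp_converges[of x] unfolding sums_def by (simp add: divide_inverse mult.commute)

lemma abs_exp_partial_sum_le: "\<bar>\<Sum>k<N. x ^ k / fact k\<bar> \<le> exp \<bar>x::real\<bar>"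
proof -
  have "\<bar>\<Sum>k<N. x ^ k / fact k\<bar> \<le> (\<Sum>k<N. \<bar>x\<bar> ^ k / fact k)"
    by (rule order_trans[OF sum_abs]) (simp add: power_abs)
  also have "\<dots> \<le> exp \<bar>x\<bar>"
  proof -
    have exp_sums: "(\<lambda>k. \<bar>x\<bar> ^ k / fact k) sums exp \<bar>x\<bar>"
      using exp_converges[of "\<bar>x\<bar>"] by (simp add: divide_inverse mult.commute)
    show ?thesis
      unfolding sums_unique[OF exp_sums] by (rule sum_le_suminf[OF sums_summable[OF exp_sums]]) auto
  qed
  finally show ?thesis .
qed

lemma add_one_less_exp:
  fixes x :: real
  assumes "x \<noteq> 0"
  shows "1 + x < exp x"
proof (cases "1 + x / 2 \<ge> 0")
  case True
  have "(1 + x / 2)\<^sup>2 \<le> (exp (x / 2))\<^sup>2"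
    using True exp_ge_add_one_self[of "x / 2"] by (intro power_mono) auto
  also have "(exp (x / 2))\<^sup>2 = exp x"
    by (simp add: power2_eq_square flip: exp_add)
  finally have "1 + x + x\<^sup>2 / 4 \<le> exp x"
    by (simp add: power2_eq_square field_simps)
  moreover have "x\<^sup>2 / 4 > 0" using assms by simp
  ultimately show ?thesis by linarith
next
  case False
  then show ?thesis using exp_gt_zero[of x] by linarith
qed

lemma exp_minus_sub_one_add_nonneg: "0 \<le> exp (- u) - 1 + (u::real)"
  using exp_ge_add_one_self[of "- u"] by simp

lemma exp_minus_sub_one_add_eq_0_iff: "exp (- u) - 1 + u = 0 \<longleftrightarrow> (u::real) = 0"
  using add_one_less_exp[of "- u"] by fastforce

section \<open>Set integrals over compact intervals\<close>

lemma set_integral_lborel_singleton [simp]: "(LBINT s:{c}. f s) = (0::real)"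
  unfolding set_lebesgue_integral_def
  by (rule integral_eq_zero_AE) (use AE_lborel_singleton[of c] in \<open>auto elim!: eventually_mono\<close>)

lemma set_integrable_Icc_subset:
  fixes u :: "real \<Rightarrow> real"
  assumes "set_integrable lborel {a..b} u" and "a \<le> c" and "d \<le> b"
  shows "set_integrable lborel {c..d} u"
  by (rule set_integrable_subset[OF assms(1)]) (use assms(2,3) in auto)

lemma set_integral_Icc_split:
  fixes g :: "real \<Rightarrow> real"
  assumes g: "set_integrable lborel {a..b} g" and t: "t \<in> {a..b}"
  shows "(LBINT s:{a..b}. g s) = (LBINT s:{a..t}. g s) + (LBINT s:{t..b}. g s)"
proof -
  have "(LBINT s:{a..b}. g s) = (LBINT s:{a..t} \<union> {t..b}. g s)"
    using t by (simp add: ivl_disj_un_two_touch)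
  also have "\<dots> = (LBINT s:{a..t}. g s) + (LBINT s:{t..b}. g s)"
  proof (rule set_integral_Un_AE)
    show "AE s in lborel. \<not> (s \<in> {a..t} \<and> s \<in> {t..b})"
      using AE_lborel_singleton[of t] by eventually_elim auto
  qed (use t in \<open>auto intro!: set_integrable_Icc_subset[OF g]\<close>)
  finally show ?thesis .
qed

lemma continuous_on_set_integral_Icc:
  fixes u :: "real \<Rightarrow> real"
  assumes "set_integrable lborel {a..b} u"
  shows "continuous_on {a..b} (\<lambda>t. LBINT s:{a..t}. u s)"
proof (rule continuous_on_eq)
  show "continuous_on {a..b} (\<lambda>t. integral {a..t} u)"
    using set_borel_integral_eq_integral(1)[OF assms] by (rule indefinite_integral_continuous_1)
  fix t assume "t \<in> {a..b}"
  then have "set_integrable lborel {a..t} u"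
    by (intro set_integrable_subset[OF assms]) auto
  then show "integral {a..t} u = (LBINT s:{a..t}. u s)"
    by (simp add: set_borel_integral_eq_integral(2))
qed

lemma set_integrable_continuous_mult:
  fixes u V :: "real \<Rightarrow> real"
  assumes u: "set_integrable lborel {a..b} u" and V: "continuous_on {a..b} V"
  shows "set_integrable lborel {a..b} (\<lambda>s. u s * V s)"
proof -
  obtain B where B: "\<And>t. t \<in> {a..b} \<Longrightarrow> norm (V t) \<le> B"
    using compact_imp_bounded[OF compact_continuous_image[OF V compact_Icc]]
    unfolding bounded_iff by fastforce
  show ?thesis
  proof (rule set_integrable_bound)
    show "set_integrable lborel {a..b} (\<lambda>s. u s * B)"
      using u by simp
    have "set_borel_measurable lborel {a..b} V" "set_borel_measurable lborel {a..b} u"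
      using set_measurable_continuous_on[OF _ V] u
      by (auto simp: set_borel_measurable_def set_integrable_def)
    then have "(\<lambda>s. (indicator {a..b} s *\<^sub>R V s) * (indicator {a..b} s *\<^sub>R u s)) \<in> borel_measurable lborel"
      unfolding set_borel_measurable_def by (rule borel_measurable_times)
    also have "(\<lambda>s. (indicator {a..b} s *\<^sub>R V s) * (indicator {a..b} s *\<^sub>R u s))
        = (\<lambda>s. indicator {a..b} s *\<^sub>R (u s * V s))"
      by (auto simp: indicator_def)
    finally show "set_borel_measurable lborel {a..b} (\<lambda>s. u s * V s)"
      unfolding set_borel_measurable_def .
    show "AE s in lborel. s \<in> {a..b} \<longrightarrow> norm (u s * V s) \<le> norm (u s * B)"
    proof (intro AE_I2 impI)
      fix s assume "s \<in> {a..b}"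
      then have "\<bar>V s\<bar> \<le> \<bar>B\<bar>" using B by force
      then show "norm (u s * V s) \<le> norm (u s * B)"
        by (simp add: abs_mult mult_left_mono)
    qed
  qed
qed

lemma tendsto_set_integral_exp_partial_sum:
  fixes u V :: "real \<Rightarrow> real"
  assumes u: "set_integrable lborel {a..b} u" and V: "continuous_on {a..b} V"
  shows "(\<lambda>N. LBINT s:{a..b}. u s * (\<Sum>k<N. V s ^ k / fact k)) \<longlonglongrightarrow> (LBINT s:{a..b}. u s * exp (V s))"
proof -
  obtain B where B: "\<And>s. s \<in> {a..b} \<Longrightarrow> \<bar>V s\<bar> \<le> B"
    using compact_imp_bounded[OF compact_continuous_image[OF V compact_Icc]]
    unfolding bounded_iff by fastforce
  show ?thesis
    unfolding set_lebesgue_integral_def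
  proof (rule integral_dominated_convergence[where w="\<lambda>s. norm (indicator {a..b} s *\<^sub>R u s) * exp B"])
    show "integrable lborel (\<lambda>s. norm (indicator {a..b} s *\<^sub>R u s) * exp B)"
      using u unfolding set_integrable_def by (intro integrable_mult_left integrable_norm)
    have "set_integrable lborel {a..b} (\<lambda>s. u s * exp (V s))"
      by (intro set_integrable_continuous_mult[OF u] continuous_intros V)
    then show "(\<lambda>s. indicator {a..b} s *\<^sub>R (u s * exp (V s))) \<in> borel_measurable lborel"
      unfolding set_integrable_def by auto
    have "set_integrable lborel {a..b} (\<lambda>s. u s * (\<Sum>k<N. V s ^ k / fact k))" for N
      by (intro set_integrable_continuous_mult[OF u] continuous_intros V) auto
    then show "(\<lambda>s. indicator {a..b} s *\<^sub>R (u s * (\<Sum>k<N. V s ^ k / fact k))) \<in> borel_measurable lborel" for N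
      unfolding set_integrable_def by auto
    show "AE s in lborel. (\<lambda>N. indicator {a..b} s *\<^sub>R (u s * (\<Sum>k<N. V s ^ k / fact k)))
        \<longlonglongrightarrow> indicator {a..b} s *\<^sub>R (u s * exp (V s))"
      by (intro AE_I2 tendsto_intros exp_partial_sum_LIMSEQ)
    show "AE s in lborel. norm (indicator {a..b} s *\<^sub>R (u s * (\<Sum>k<N. V s ^ k / fact k)))
        \<le> norm (indicator {a..b} s *\<^sub>R u s) * exp B" for N
    proof (intro AE_I2)
      fix s
      show "norm (indicator {a..b} s *\<^sub>R (u s * (\<Sum>k<N. V s ^ k / fact k)))
        \<le> norm (indicator {a..b} s *\<^sub>R u s) * exp B"
      proof (cases "s \<in> {a..b}")
        case True
        then have "\<bar>\<Sum>k<N. V s ^ k / fact k\<bar> \<le> exp B"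
          using B abs_exp_partial_sum_le[where x="V s"] by (meson exp_le_cancel_iff order_trans)
        then show ?thesis using True by (simp add: abs_mult mult_left_mono)
      qed simp
    qed
  qed
qed

lemma set_integral_nonneg_eq_0_imp_AE:
  fixes f :: "'a \<Rightarrow> real"
  assumes "set_integrable M A f" and "\<And>x. x \<in> A \<Longrightarrow> 0 \<le> f x" and "(LINT x:A|M. f x) = 0"
  shows "AE x in M. x \<in> A \<longrightarrow> f x = 0"
proof -
  have "AE x in M. indicator A x *\<^sub>R f x = 0"
    using assms by (subst integral_nonneg_eq_0_iff_AE[symmetric])
      (auto simp: set_integrable_def set_lebesgue_integral_def indicator_def)
  then show ?thesis
    by eventually_elim (simp add: indicator_def)
qed

lemma integrable_lborel_product:
  fixes f h :: "real \<Rightarrow> real"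
  assumes f: "integrable lborel f" and h: "integrable lborel h"
  shows "integrable (lborel \<Otimes>\<^sub>M lborel) (\<lambda>(x, y). f x * h y)"
proof (rule lborel_pair.Fubini_integrable)
  show "(\<lambda>(x, y). f x * h y) \<in> borel_measurable (lborel \<Otimes>\<^sub>M lborel)"
    using f h by measurable
  show "integrable lborel (\<lambda>x. \<integral>y. norm ((\<lambda>(x, y). f x * h y) (x, y)) \<partial>lborel)"
    using f by (simp add: abs_mult)
  show "AE x in lborel. integrable lborel (\<lambda>y. (\<lambda>(x, y). f x * h y) (x, y))"
    using h by simp
qed

lemma integral_product_split_diagonal:
  fixes f h :: "real \<Rightarrow> real"
  assumes f: "integrable lborel f" and h: "integrable lborel h"
  shows "(\<integral>x. f x * (LBINT y:{..x}. h y) + h x * (LBINT y:{..x}. f y) \<partial>lborel)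
    = (\<integral>x. f x \<partial>lborel) * (\<integral>x. h x \<partial>lborel)"
proof -
  have [measurable]: "f \<in> borel_measurable borel" "h \<in> borel_measurable borel"
    using f h by auto
  define below where "below x y = f x * (indicator {..x} y * h y)" for x y :: real
  define above where "above x y = f x * (indicator {x<..} y * h y)" for x y :: real
  have fh: "integrable (lborel \<Otimes>\<^sub>M lborel) (\<lambda>(x, y). f x * h y)"
    by (rule integrable_lborel_product[OF f h])
  have below: "integrable (lborel \<Otimes>\<^sub>M lborel) (case_prod below)"
    unfolding below_def by (rule Bochner_Integration.integrable_bound[OF fh]) (auto simp: abs_mult indicator_def)
  have above: "integrable (lborel \<Otimes>\<^sub>M lborel) (case_prod above)"
    unfolding above_def by (rule Bochner_Integration.integrable_bound[OF fh]) (auto simp: abs_mult indicator_def)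
  have below_x: "integrable lborel (below x)" for x
    unfolding below_def using integrable_mult_indicator[OF _ h, of "{..x}"] by simp
  have above_x: "integrable lborel (\<lambda>y. above x y)" for x
    unfolding above_def using integrable_mult_indicator[OF _ h, of "{x<..}"] by simp
  have above_y: "(\<integral>x. above x y \<partial>lborel) = h y * (LBINT x:{..y}. f x)" for y
  proof -
    have ae: "AE x in lborel. above x y = h y * (indicator {..y} x * f x)"
      using AE_lborel_singleton[of y] by eventually_elim (auto simp: above_def indicator_def)
    have "(\<integral>x. above x y \<partial>lborel) = (\<integral>x. h y * (indicator {..y} x * f x) \<partial>lborel)"
      by (rule integral_cong_AE[OF _ _ ae]) (simp_all add: above_def indicator_def)
    then show ?thesis
      by (simp add: set_lebesgue_integral_def)
  qed
  have "(\<integral>x. f x \<partial>lborel) * (\<integral>y. h y \<partial>lborel)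
      = (\<integral>x. (\<integral>y. below x y + above x y \<partial>lborel) \<partial>lborel)"
  proof -
    have "below x y + above x y = f x * h y" for x y
      by (auto simp: below_def above_def indicator_def algebra_simps)
    then show ?thesis by simp
  qed
  also have "\<dots> = (\<integral>x. (\<integral>y. below x y \<partial>lborel) \<partial>lborel)
      + (\<integral>x. (\<integral>y. above x y \<partial>lborel) \<partial>lborel)"
    using below_x above_x lborel_pair.integrable_fst[OF below] lborel_pair.integrable_fst[OF above]
    by simp
  also have "(\<integral>x. (\<integral>y. above x y \<partial>lborel) \<partial>lborel)
      = (\<integral>y. (\<integral>x. above x y \<partial>lborel) \<partial>lborel)"
    using lborel_pair.Fubini_integral[OF above] by simp
  also have "(\<integral>x. (\<integral>y. below x y \<partial>lborel) \<partial>lborel) + (\<integral>y. (\<integral>x. above x y \<partial>lborel) \<partial>lborel)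
      = (\<integral>x. (\<integral>y. below x y \<partial>lborel) + (\<integral>y. above y x \<partial>lborel) \<partial>lborel)"
    using lborel_pair.integrable_fst[OF below] lborel_pair.integrable_snd[OF above] by simp
  finally show ?thesis
    by (simp add: below_def above_y set_lebesgue_integral_def)
qed

section \<open>Lebesgue primitives\<close>

definition lebesgue_primitive :: "real \<Rightarrow> real \<Rightarrow> (real \<Rightarrow> real) \<Rightarrow> (real \<Rightarrow> real) \<Rightarrow> bool" where
  "lebesgue_primitive a b U u \<longleftrightarrow>
     set_integrable lborel {a..b} u \<and> (\<forall>t\<in>{a..b}. U t = U a + (LBINT s:{a..t}. u s))"

lemma lebesgue_primitiveI:
  assumes "set_integrable lborel {a..b} u" and "\<And>t. t \<in> {a..b} \<Longrightarrow> U t = U a + (LBINT s:{a..t}. u s)"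
  shows "lebesgue_primitive a b U u"
  using assms unfolding lebesgue_primitive_def by blast

lemma lebesgue_primitive_integrable:
  "lebesgue_primitive a b U u \<Longrightarrow> set_integrable lborel {a..b} u"
  unfolding lebesgue_primitive_def by blast

lemma lebesgue_primitive_eq:
  "lebesgue_primitive a b U u \<Longrightarrow> t \<in> {a..b} \<Longrightarrow> U t = U a + (LBINT s:{a..t}. u s)"
  unfolding lebesgue_primitive_def by blast

lemma lebesgue_primitive_continuous:
  assumes "lebesgue_primitive a b U u"
  shows "continuous_on {a..b} U"
proof (rule continuous_on_eq)
  show "continuous_on {a..b} (\<lambda>t. U a + (LBINT s:{a..t}. u s))"
    using lebesgue_primitive_integrable[OF assms]
    by (intro continuous_on_add continuous_on_const continuous_on_set_integral_Icc)
qed (rule lebesgue_primitive_eq[OF assms, symmetric])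

lemma lebesgue_primitive_subinterval:
  assumes "lebesgue_primitive a b U u" and "t \<in> {a..b}"
  shows "lebesgue_primitive a t U u"
proof (rule lebesgue_primitiveI)
  show "set_integrable lborel {a..t} u"
    using assms(2) by (intro set_integrable_Icc_subset[OF lebesgue_primitive_integrable[OF assms(1)]]) auto
  show "U s = U a + (LBINT r:{a..s}. u r)" if "s \<in> {a..t}" for s
    using that assms(2) by (intro lebesgue_primitive_eq[OF assms(1)]) auto
qed

lemma lebesgue_primitive_cong:
  assumes "lebesgue_primitive a b U u"
    and "\<And>t. t \<in> {a..b} \<Longrightarrow> U' t = U t" and "\<And>s. s \<in> {a..b} \<Longrightarrow> u' s = u s"
  shows "lebesgue_primitive a b U' u'"
proof (rule lebesgue_primitiveI)
  show "set_integrable lborel {a..b} u'"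
    using lebesgue_primitive_integrable[OF assms(1)] set_integrable_cong[of lborel lborel "{a..b}" "{a..b}" u' u] assms(3)
    by simp
  fix t assume t: "t \<in> {a..b}"
  have "(LBINT s:{a..t}. u' s) = (LBINT s:{a..t}. u s)"
    by (rule set_lebesgue_integral_cong) (use t assms(3) in auto)
  then show "U' t = U' a + (LBINT s:{a..t}. u' s)"
    using t assms(2)[of t] assms(2)[of a] lebesgue_primitive_eq[OF assms(1) t] by auto
qed

lemma lebesgue_primitive_const: "lebesgue_primitive a b (\<lambda>_. c) (\<lambda>_. 0)"
  by (rule lebesgue_primitiveI) (auto simp: set_integrable_def)

lemma lebesgue_primitive_set_integral:
  "set_integrable lborel {a..b} u \<Longrightarrow> lebesgue_primitive a b (\<lambda>t. LBINT s:{a..t}. u s) u"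
  by (rule lebesgue_primitiveI) simp_all

lemma lebesgue_primitive_tail_integral:
  fixes g :: "real \<Rightarrow> real"
  assumes g: "set_integrable lborel {a..b} g"
  shows "lebesgue_primitive a b (\<lambda>t. LBINT s:{t..b}. g s) (\<lambda>s. - g s)"
proof (rule lebesgue_primitiveI)
  show "set_integrable lborel {a..b} (\<lambda>s. - g s)"
    using g by (simp add: set_integrable_def)
  fix t assume t: "t \<in> {a..b}"
  have "set_integrable lborel {a..t} g"
    using t by (intro set_integrable_Icc_subset[OF g]) auto
  then show "(LBINT s:{t..b}. g s) = (LBINT s:{a..b}. g s) + (LBINT s:{a..t}. - g s)"
    using set_integral_Icc_split[OF g t] by (simp add: set_integral_uminus)
qed

lemma lebesgue_primitive_C1:
  assumes "\<And>s. s \<in> {a..b} \<Longrightarrow> (U has_real_derivative u s) (at s within {a..b})"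
    and "continuous_on {a..b} u"
  shows "lebesgue_primitive a b U u"
proof (rule lebesgue_primitiveI)
  show iu: "set_integrable lborel {a..b} u"
    by (rule borel_integrable_atLeastAtMost'[OF assms(2)])
  fix t assume t: "t \<in> {a..b}"
  have "(u has_integral (U t - U a)) {a..t}"
  proof (rule fundamental_theorem_of_calculus)
    show "a \<le> t" using t by simp
    fix x assume x: "x \<in> {a..t}"
    have "(U has_real_derivative u x) (at x within {a..t})"
      by (rule DERIV_subset[OF assms(1)]) (use x t in auto)
    then show "(U has_vector_derivative u x) (at x within {a..t})"
      by (simp add: has_real_derivative_iff_has_vector_derivative)
  qed
  moreover have "set_integrable lborel {a..t} u"
    using t by (intro set_integrable_Icc_subset[OF iu]) auto
  ultimately show "U t = U a + (LBINT s:{a..t}. u s)"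
    by (simp add: set_borel_integral_eq_integral(2) integral_unique)
qed

lemma lebesgue_primitive_add:
  assumes U: "lebesgue_primitive a b U u" and V: "lebesgue_primitive a b V v"
  shows "lebesgue_primitive a b (\<lambda>t. U t + V t) (\<lambda>s. u s + v s)"
proof (rule lebesgue_primitiveI)
  note iu = lebesgue_primitive_integrable[OF U] and iv = lebesgue_primitive_integrable[OF V]
  show "set_integrable lborel {a..b} (\<lambda>s. u s + v s)"
    using iu iv by (rule set_integral_add(1))
  fix t assume t: "t \<in> {a..b}"
  have "set_integrable lborel {a..t} u" "set_integrable lborel {a..t} v"
    using t set_integrable_Icc_subset[OF iu] set_integrable_Icc_subset[OF iv] by auto
  then show "U t + V t = U a + V a + (LBINT s:{a..t}. u s + v s)"
    using lebesgue_primitive_eq[OF U t] lebesgue_primitive_eq[OF V t] by (simp add: set_integral_add)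
qed

lemma lebesgue_primitive_cmult:
  assumes "lebesgue_primitive a b U u"
  shows "lebesgue_primitive a b (\<lambda>t. c * U t) (\<lambda>s. c * u s)"
proof (rule lebesgue_primitiveI)
  show "set_integrable lborel {a..b} (\<lambda>s. c * u s)"
    using lebesgue_primitive_integrable[OF assms] by simp
  show "c * U t = c * U a + (LBINT s:{a..t}. c * u s)" if "t \<in> {a..b}" for t
    using lebesgue_primitive_eq[OF assms that] by (simp add: algebra_simps)
qed

lemma set_integral_primitive_product:
  assumes U: "lebesgue_primitive a b U u" and V: "lebesgue_primitive a b V v" and "a \<le> b"
  shows "(LBINT x:{a..b}. u x * (V x - V a) + v x * (U x - U a)) = (U b - U a) * (V b - V a)"
proof -
  define f where "f x = indicator {a..b} x * u x" for x
  define h where "h x = indicator {a..b} x * v x" for x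
  have f: "integrable lborel f" and h: "integrable lborel h"
    using lebesgue_primitive_integrable[OF U] lebesgue_primitive_integrable[OF V]
    unfolding f_def[abs_def] h_def[abs_def] by (auto simp: set_integrable_def)
  have initial: "(LBINT y:{..x}. indicator {a..b} y * w y) = (LBINT y:{a..x}. w y)"
    if "x \<le> b" for x and w :: "real \<Rightarrow> real"
    unfolding set_lebesgue_integral_def
    by (rule Bochner_Integration.integral_cong) (use that in \<open>auto simp: indicator_def\<close>)
  have pointwise: "f x * (LBINT y:{..x}. h y) + h x * (LBINT y:{..x}. f y)
      = indicator {a..b} x * (u x * (V x - V a) + v x * (U x - U a))" for x
  proof (cases "x \<in> {a..b}")
    case True
    then show ?thesis
      using initial[of x u] initial[of x v] lebesgue_primitive_eq[OF U True] lebesgue_primitive_eq[OF V True]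
      by (simp add: f_def h_def)
  qed (simp add: f_def h_def)
  have "(LBINT x:{a..b}. u x * (V x - V a) + v x * (U x - U a))
      = (\<integral>x. f x * (LBINT y:{..x}. h y) + h x * (LBINT y:{..x}. f y) \<partial>lborel)"
    unfolding pointwise by (simp add: set_lebesgue_integral_def)
  also have "\<dots> = (\<integral>x. f x \<partial>lborel) * (\<integral>x. h x \<partial>lborel)"
    by (rule integral_product_split_diagonal[OF f h])
  also have "\<dots> = (U b - U a) * (V b - V a)"
    using lebesgue_primitive_eq[OF U, of b] lebesgue_primitive_eq[OF V, of b] \<open>a \<le> b\<close>
    by (simp add: f_def h_def set_lebesgue_integral_def)
  finally show ?thesis .
qed

lemma lebesgue_primitive_mult:
  assumes U: "lebesgue_primitive a b U u" and V: "lebesgue_primitive a b V v"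
  shows "lebesgue_primitive a b (\<lambda>t. U t * V t) (\<lambda>s. u s * V s + U s * v s)"
proof (rule lebesgue_primitiveI)
  note iu = lebesgue_primitive_integrable[OF U] and iv = lebesgue_primitive_integrable[OF V]
  have uV: "set_integrable lborel {a..b} (\<lambda>s. u s * (V s - c))" for c
    using set_integrable_continuous_mult[OF iu continuous_on_diff[OF lebesgue_primitive_continuous[OF V]]] by simp
  have Uv: "set_integrable lborel {a..b} (\<lambda>s. v s * (U s - c))" for c
    using set_integrable_continuous_mult[OF iv continuous_on_diff[OF lebesgue_primitive_continuous[OF U]]] by simp
  show "set_integrable lborel {a..b} (\<lambda>s. u s * V s + U s * v s)"
    using set_integral_add(1)[OF uV[of 0] Uv[of 0]] by (simp add: mult.commute)
  fix t assume t: "t \<in> {a..b}"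
  have "set_integrable lborel {a..t} u" "set_integrable lborel {a..t} v"
    "set_integrable lborel {a..t} (\<lambda>s. u s * (V s - V a))"
    "set_integrable lborel {a..t} (\<lambda>s. v s * (U s - U a))"
    using t by (auto intro!: set_integrable_Icc_subset[OF iu] set_integrable_Icc_subset[OF iv]
        set_integrable_Icc_subset[OF uV] set_integrable_Icc_subset[OF Uv])
  moreover have "(LBINT s:{a..t}. u s * V s + U s * v s)
      = (LBINT s:{a..t}. (u s * (V s - V a) + v s * (U s - U a)) + (V a * u s + U a * v s))"
    by (rule set_lebesgue_integral_cong) (auto simp: algebra_simps)
  ultimately have "(LBINT s:{a..t}. u s * V s + U s * v s)
      = (U t - U a) * (V t - V a) + V a * (U t - U a) + U a * (V t - V a)"
    using t set_integral_primitive_product[OF lebesgue_primitive_subinterval[OF U t]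
        lebesgue_primitive_subinterval[OF V t]] lebesgue_primitive_eq[OF U t] lebesgue_primitive_eq[OF V t]
    by (simp add: set_integral_add)
  then show "U t * V t = U a * V a + (LBINT s:{a..t}. u s * V s + U s * v s)"
    by (simp add: algebra_simps)
qed

lemma lebesgue_primitive_power:
  assumes "lebesgue_primitive a b U u"
  shows "lebesgue_primitive a b (\<lambda>t. U t ^ Suc n) (\<lambda>s. real (Suc n) * u s * U s ^ n)"
proof (induction n)
  case 0
  show ?case using assms by (rule lebesgue_primitive_cong) auto
next
  case (Suc n)
  from lebesgue_primitive_mult[OF assms Suc] show ?case
    by (rule lebesgue_primitive_cong) (auto simp: algebra_simps)
qed

lemma lebesgue_primitive_exp_partial_sum:
  assumes "lebesgue_primitive a b U u"
  shows "lebesgue_primitive a b (\<lambda>t. \<Sum>k<Suc N. U t ^ k / fact k) (\<lambda>s. u s * (\<Sum>k<N. U s ^ k / fact k))"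
proof (induction N)
  case 0
  show ?case by (rule lebesgue_primitive_cong[OF lebesgue_primitive_const[of a b 1]]) auto
next
  case (Suc N)
  have "1 / fact (Suc N) * (real (Suc N) * u s * U s ^ N) = u s * (U s ^ N / fact N)" for s
    by (simp add: field_simps del: of_nat_Suc)
  with lebesgue_primitive_add[OF Suc lebesgue_primitive_cmult[OF lebesgue_primitive_power[OF assms], of "1 / fact (Suc N)" N]]
  show ?case
    by (rule_tac lebesgue_primitive_cong) (auto simp: algebra_simps)
qed

lemma lebesgue_primitive_exp:
  assumes U: "lebesgue_primitive a b U u"
  shows "lebesgue_primitive a b (\<lambda>t. exp (U t)) (\<lambda>s. u s * exp (U s))"
proof (rule lebesgue_primitiveI)
  note iu = lebesgue_primitive_integrable[OF U] and cU = lebesgue_primitive_continuous[OF U]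
  show "set_integrable lborel {a..b} (\<lambda>s. u s * exp (U s))"
    by (intro set_integrable_continuous_mult[OF iu] continuous_intros cU)
  fix t assume t: "t \<in> {a..b}"
  have "(\<lambda>N. LBINT s:{a..t}. u s * (\<Sum>k<N. U s ^ k / fact k)) \<longlonglongrightarrow> (LBINT s:{a..t}. u s * exp (U s))"
    using t by (intro tendsto_set_integral_exp_partial_sum set_integrable_Icc_subset[OF iu]
        continuous_on_subset[OF cU]) auto
  moreover have "(\<lambda>N. LBINT s:{a..t}. u s * (\<Sum>k<N. U s ^ k / fact k))
      = (\<lambda>N. (\<Sum>k<Suc N. U t ^ k / fact k) - (\<Sum>k<Suc N. U a ^ k / fact k))"
    using lebesgue_primitive_eq[OF lebesgue_primitive_exp_partial_sum[OF U] t] by auto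
  moreover have "(\<lambda>N. (\<Sum>k<Suc N. U t ^ k / fact k) - (\<Sum>k<Suc N. U a ^ k / fact k))
      \<longlonglongrightarrow> exp (U t) - exp (U a)"
    by (intro tendsto_diff LIMSEQ_Suc exp_partial_sum_LIMSEQ)
  ultimately show "exp (U t) = exp (U a) + (LBINT s:{a..t}. u s * exp (U s))"
    using LIMSEQ_unique by fastforce
qed

section \<open>The global kernel\<close>

lemma lebesgue_primitive_qf: "lebesgue_primitive a T (qf T) (\<lambda>s. (qf T s)\<^sup>2)"
proof (rule lebesgue_primitive_C1)
  fix s assume "s \<in> {a..T}"
  then have "T - s + 1 \<noteq> 0" by auto
  then show "(qf T has_real_derivative (qf T s)\<^sup>2) (at s within {a..T})"
    unfolding qf_def by (auto intro!: derivative_eq_intros simp: power2_eq_square field_simps)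
next
  show "continuous_on {a..T} (\<lambda>s. (qf T s)\<^sup>2)"
    unfolding qf_def by (intro continuous_intros) auto
qed

lemma lebesgue_primitive_optimal_D:
  assumes "set_integrable lborel {a..T} g"
  shows "lebesgue_primitive a T (\<lambda>t. qf T t * (LBINT s:{t..T}. g s))
    (\<lambda>s. qf T s * (qf T s * (LBINT r:{s..T}. g r) - g s))"
  using lebesgue_primitive_mult[OF lebesgue_primitive_qf lebesgue_primitive_tail_integral[OF assms]]
  by (rule lebesgue_primitive_cong) (auto simp: power2_eq_square algebra_simps)

lemma lebesgue_primitive_discounted_exp:
  assumes "lebesgue_primitive a T Y (\<lambda>s. c * qf T s * y s)"
  shows "lebesgue_primitive a T (\<lambda>t. (T - t + 1) * exp (Y t)) (\<lambda>s. exp (Y s) * (c * y s - 1))"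
proof -
  have "lebesgue_primitive a T (\<lambda>t. T - t + 1) (\<lambda>_. - 1)"
    by (rule lebesgue_primitive_C1) (auto intro!: derivative_eq_intros)
  from lebesgue_primitive_mult[OF this lebesgue_primitive_exp[OF assms]] show ?thesis
    by (rule lebesgue_primitive_cong) (auto simp: qf_def field_simps)
qed

lemma kernel_integral_decomposition:
  fixes g D :: "real \<Rightarrow> real" and a T :: real
  defines "Dopt \<equiv> \<lambda>t. qf T t * (LBINT s:{t..T}. g s)"
    and "X \<equiv> \<lambda>t. LBINT s:{0..t}. - a * qf T s * (g s - D s)"
  defines "gap \<equiv> \<lambda>t. exp (X t - a * Dopt t) * (exp (- (a * (D t - Dopt t))) - 1 + a * (D t - Dopt t))"
  assumes T: "0 \<le> T" and a: "0 < a"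
    and g: "set_integrable lborel {0..T} g"
    and inner: "set_integrable lborel {0..T} (\<lambda>s. - a * qf T s * (g s - D s))"
    and outer: "set_integrable lborel {0..T} (\<lambda>t. exp (X t) * (qf T t * (g t - D t) + Uexp a (D t)))"
  shows "set_integrable lborel {0..T} gap"
    and "0 \<le> gap t" and "gap t = 0 \<longleftrightarrow> D t = Dopt t"
    and "(LBINT t:{0..T}. exp (X t) * (qf T t * (g t - D t) + Uexp a (D t)))
      = 1 / a * (1 - (T + 1) * exp (- a / (T + 1) * (LBINT s:{0..T}. g s))) - (LBINT t:{0..T}. gap t) / a"
proof -
  define i where "i s = - a * qf T s * (g s - D s)" for s
  define rate where "rate t = exp (X t) * (qf T t * (g t - D t) + Uexp a (D t))" for t
  define Y where "Y t = X t - a * Dopt t" for t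
  define w where "w s = exp (Y s) * (a * (D s - Dopt s) - 1)" for s
  have X: "lebesgue_primitive 0 T X i"
    unfolding X_def i_def by (rule lebesgue_primitive_set_integral[OF inner])
  have Y: "lebesgue_primitive 0 T Y (\<lambda>s. a * qf T s * (D s - Dopt s))"
    using lebesgue_primitive_add[OF X lebesgue_primitive_cmult[OF lebesgue_primitive_optimal_D[OF g], of "- a"]]
    by (rule lebesgue_primitive_cong) (auto simp: Y_def Dopt_def i_def algebra_simps)
  have expX: "lebesgue_primitive 0 T (\<lambda>t. exp (X t)) (\<lambda>s. i s * exp (X s))"
    by (rule lebesgue_primitive_exp[OF X])
  have W: "lebesgue_primitive 0 T (\<lambda>t. (T - t + 1) * exp (Y t)) w"
    unfolding w_def by (rule lebesgue_primitive_discounted_exp[OF Y])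
  have gap_eq: "gap t = w t - i t * exp (X t) - a * rate t" for t
  proof -
    have "exp (X t - a * Dopt t) * exp (- (a * (D t - Dopt t))) = exp (X t) * exp (- a * D t)"
      by (simp flip: exp_add) (simp add: algebra_simps)
    then show ?thesis
      using a by (simp add: gap_def w_def Y_def i_def rate_def Uexp_def field_simps)
  qed
  have irate: "set_integrable lborel {0..T} rate"
    using outer unfolding rate_def X_def .
  note iw = lebesgue_primitive_integrable[OF W] and iX = lebesgue_primitive_integrable[OF expX]
  show igap: "set_integrable lborel {0..T} gap"
    unfolding gap_eq[abs_def] using iw iX irate by (intro set_integral_diff(1) set_integrable_mult_right) auto
  show "0 \<le> gap t"
    unfolding gap_def by (simp add: exp_minus_sub_one_add_nonneg)
  show "gap t = 0 \<longleftrightarrow> D t = Dopt t"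
    unfolding gap_def using a by (simp add: exp_minus_sub_one_add_eq_0_iff)
  have "T \<in> {0..T}" using T by simp
  have "rate t = (w t - i t * exp (X t) - gap t) / a" for t
    using gap_eq[of t] a by (simp add: field_simps)
  then have "(LBINT t:{0..T}. rate t)
      = ((LBINT t:{0..T}. w t) - (LBINT t:{0..T}. i t * exp (X t)) - (LBINT t:{0..T}. gap t)) / a"
    using iw iX igap by (simp add: set_integral_diff)
  also have "(LBINT t:{0..T}. w t) = exp (X T) - (T + 1) * exp (Y 0)"
    using lebesgue_primitive_eq[OF W \<open>T \<in> {0..T}\<close>] by (simp add: Y_def Dopt_def)
  also have "(LBINT t:{0..T}. i t * exp (X t)) = exp (X T) - 1"
    using lebesgue_primitive_eq[OF expX \<open>T \<in> {0..T}\<close>] by (simp add: X_def)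
  also have "Y 0 = - a / (T + 1) * (LBINT s:{0..T}. g s)"
    by (simp add: Y_def X_def Dopt_def qf_def)
  finally show "(LBINT t:{0..T}. rate t)
      = 1 / a * (1 - (T + 1) * exp (- a / (T + 1) * (LBINT s:{0..T}. g s))) - (LBINT t:{0..T}. gap t) / a"
    by (simp add: diff_divide_distrib)
qed

lemma admissible_D_optimal:
  assumes g: "set_integrable lborel {0..T} (\<lambda>s. hloc a T s (theta s) (Pol s))"
  shows "admissible_D a T Pol (\<lambda>t. qf T t * (LBINT s:{t..T}. hloc a T s (theta s) (Pol s))) theta"
proof -
  define h where "h s = hloc a T s (theta s) (Pol s)" for s
  define Dopt where "Dopt t = qf T t * (LBINT s:{t..T}. h s)" for t
  have ih: "set_integrable lborel {0..T} h"
    using g unfolding h_def .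
  have cq: "continuous_on {0..T} (qf T)"
    unfolding qf_def by (intro continuous_intros) auto
  have cD: "continuous_on {0..T} Dopt"
    unfolding Dopt_def by (rule lebesgue_primitive_continuous[OF lebesgue_primitive_optimal_D[OF ih]])
  have affine: "set_integrable lborel {0..T} (\<lambda>s. h s * V s + W s)"
    if "continuous_on {0..T} V" "continuous_on {0..T} W" for V W
    using set_integrable_continuous_mult[OF ih that(1)] borel_integrable_atLeastAtMost'[OF that(2)]
    by (rule set_integral_add(1))
  have "inner_int a T Pol Dopt theta = (\<lambda>s. h s * (- a * qf T s) + a * qf T s * Dopt s)"
    by (simp add: fun_eq_iff inner_int_def h_def algebra_simps)
  moreover have "set_integrable lborel {0..T} (\<lambda>s. h s * (- a * qf T s) + a * qf T s * Dopt s)"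
    by (intro affine continuous_intros cq cD)
  ultimately have inner: "set_integrable lborel {0..T} (inner_int a T Pol Dopt theta)"
    by simp
  define X where "X t = (LBINT s:{0..t}. inner_int a T Pol Dopt theta s)" for t
  have cX: "continuous_on {0..T} X"
    unfolding X_def by (rule continuous_on_set_integral_Icc[OF inner])
  have "outer_int a T Pol Dopt theta
      = (\<lambda>t. h t * (exp (X t) * qf T t) + exp (X t) * (- qf T t * Dopt t + Uexp a (Dopt t)))"
    by (simp add: fun_eq_iff outer_int_def X_def h_def algebra_simps)
  moreover have "set_integrable lborel {0..T}
      (\<lambda>t. h t * (exp (X t) * qf T t) + exp (X t) * (- qf T t * Dopt t + Uexp a (Dopt t)))"
    unfolding Uexp_def divide_inverse by (intro affine continuous_intros cq cD cX)
  ultimately have outer: "set_integrable lborel {0..T} (outer_int a T Pol Dopt theta)"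
    by simp
  moreover have "Dopt \<in> borel_measurable (restrict_space borel {0..T})"
    by (rule borel_measurable_continuous_on_restrict[OF cD])
  ultimately show ?thesis
    using inner unfolding admissible_D_def Dopt_def[abs_def] h_def by blast
qed

lemma Hglob_eq_optimum_minus_gap:
  assumes "0 \<le> T" and "0 < a"
    and g: "set_integrable lborel {0..T} (\<lambda>s. hloc a T s (theta s) (Pol s))"
    and D: "admissible_D a T Pol D theta"
  obtains gap where "set_integrable lborel {0..T} gap" and "\<And>t. 0 \<le> gap t"
    and "\<And>t. gap t = 0 \<longleftrightarrow> D t = qf T t * (LBINT s:{t..T}. hloc a T s (theta s) (Pol s))"
    and "Hglob a T Pol D theta
      = 1 / a * (1 - (T + 1) * exp (- a / (T + 1) * (LBINT s:{0..T}. hloc a T s (theta s) (Pol s))))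
        - (LBINT t:{0..T}. gap t) / a"
proof -
  have inner: "set_integrable lborel {0..T} (\<lambda>s. - a * qf T s * (hloc a T s (theta s) (Pol s) - D s))"
    using D by (simp add: admissible_D_def inner_int_def[abs_def])
  have outer: "set_integrable lborel {0..T} (\<lambda>t. exp (LBINT s:{0..t}. - a * qf T s * (hloc a T s (theta s) (Pol s) - D s))
      * (qf T t * (hloc a T t (theta t) (Pol t) - D t) + Uexp a (D t)))"
    using D by (simp add: admissible_D_def outer_int_def[abs_def] inner_int_def[abs_def])
  note decomposition = kernel_integral_decomposition[OF assms(1,2) g inner outer]
  show ?thesis
    by (rule that[OF decomposition(1-3)])
      (unfold Hglob_def outer_int_def inner_int_def, rule decomposition(4))
qed

lemma Hglob_optimal_D:
  assumes "0 \<le> T" and "0 < a" and g: "set_integrable lborel {0..T} (\<lambda>s. hloc a T s (theta s) (Pol s))"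
  shows "Hglob a T Pol (\<lambda>t. qf T t * (LBINT s:{t..T}. hloc a T s (theta s) (Pol s))) theta
    = 1 / a * (1 - (T + 1) * exp (- a / (T + 1) * (LBINT s:{0..T}. hloc a T s (theta s) (Pol s))))"
  by (rule Hglob_eq_optimum_minus_gap[OF assms admissible_D_optimal[OF g]]) simp

lemma Hglob_le_optimum:
  assumes "0 \<le> T" and "0 < a"
    and "set_integrable lborel {0..T} (\<lambda>s. hloc a T s (theta s) (Pol s))"
    and "admissible_D a T Pol D theta"
  shows "Hglob a T Pol D theta
      \<le> 1 / a * (1 - (T + 1) * exp (- a / (T + 1) * (LBINT s:{0..T}. hloc a T s (theta s) (Pol s))))"
    and "Hglob a T Pol D theta
      = 1 / a * (1 - (T + 1) * exp (- a / (T + 1) * (LBINT s:{0..T}. hloc a T s (theta s) (Pol s))))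
      \<Longrightarrow> AE t in lborel. t \<in> {0..T} \<longrightarrow> D t = qf T t * (LBINT s:{t..T}. hloc a T s (theta s) (Pol s))"
proof -
  obtain gap where igap: "set_integrable lborel {0..T} gap" and nonneg: "\<And>t. 0 \<le> gap t"
    and zero: "\<And>t. gap t = 0 \<longleftrightarrow> D t = qf T t * (LBINT s:{t..T}. hloc a T s (theta s) (Pol s))"
    and H_D: "Hglob a T Pol D theta
      = 1 / a * (1 - (T + 1) * exp (- a / (T + 1) * (LBINT s:{0..T}. hloc a T s (theta s) (Pol s))))
        - (LBINT t:{0..T}. gap t) / a"
    using Hglob_eq_optimum_minus_gap[OF assms] by blast
  have "0 \<le> (LBINT t:{0..T}. gap t)"
    unfolding set_lebesgue_integral_def by (simp add: nonneg)
  then show "Hglob a T Pol D theta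
      \<le> 1 / a * (1 - (T + 1) * exp (- a / (T + 1) * (LBINT s:{0..T}. hloc a T s (theta s) (Pol s))))"
    using H_D \<open>0 < a\<close> by simp
  assume "Hglob a T Pol D theta
      = 1 / a * (1 - (T + 1) * exp (- a / (T + 1) * (LBINT s:{0..T}. hloc a T s (theta s) (Pol s))))"
  then have "(LBINT t:{0..T}. gap t) = 0"
    using H_D \<open>0 < a\<close> by simp
  from set_integral_nonneg_eq_0_imp_AE[OF igap nonneg this]
  show "AE t in lborel. t \<in> {0..T} \<longrightarrow> D t = qf T t * (LBINT s:{t..T}. hloc a T s (theta s) (Pol s))"
    by (simp add: zero)
qed

theorem theorem5p7:
  fixes eps T a :: real and C :: "'n::finite triple set"
    and Theta :: "real \<Rightarrow> 'n triple set" and kappa :: "real \<Rightarrow> real"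
    and theta :: "real \<Rightarrow> 'n triple" and Pol :: "real \<Rightarrow> real^'n"
  assumes "standing eps T C Theta kappa"
    and "a > 0"
    and "\<forall>t\<in>{0..T}. \<forall>(b, S, F)\<in>Theta t.
           b \<bullet> (matrix_inv S *v b) \<le> 2 * qf T t * (1 - ln (qf T t))"
    and "theta_sel eps T C Theta theta"
    and "Pol \<in> borel_measurable (restrict_space borel {0..T})"
    and "set_integrable lborel {0..T} (\<lambda>s. hloc a T s (theta s) (Pol s))"
  defines "Dstar \<equiv> (\<lambda>t. qf T t * (LBINT s:{t..T}. hloc a T s (theta s) (Pol s)))"
  shows "admissible_D a T Pol Dstar theta
    \<and> (\<forall>D. admissible_D a T Pol D theta \<longrightarrow>
          Hglob a T Pol D theta \<le> Hglob a T Pol Dstar theta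
          \<and> (Hglob a T Pol D theta = Hglob a T Pol Dstar theta \<longrightarrow>
               (AE t in lborel. t \<in> {0..T} \<longrightarrow> D t = Dstar t)))
    \<and> Hglob a T Pol Dstar theta
        = 1 / a * (1 - (T + 1) * exp (- a / (T + 1) * (LBINT s:{0..T}. hloc a T s (theta s) (Pol s))))"
proof -
  have "0 \<le> T"
    using assms(1) by (simp add: standing_def)
  show ?thesis
    unfolding Dstar_def
    using admissible_D_optimal[OF assms(6)] Hglob_le_optimum[OF \<open>0 \<le> T\<close> \<open>a > 0\<close> assms(6)]
    by (simp add: Hglob_optimal_D[OF \<open>0 \<le> T\<close> \<open>a > 0\<close> assms(6)])
qed

end
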